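(* Let $k\ge 0$ and let $V$ be a simple graded module over the graded tensor product $\mathcal C_k\otimes\mathfrak A_n$. For $(a_1,\dots,a_n)\in\mathbb C^n$ let $V(a_1,\dots,a_n)$ be the space of common eigenvectors of $\pi_1^2,\dots,\pi_n^2$ with eigenvalues $a_1,\dots,a_n$, and suppose $V(a_1,\dots,a_n)\neq 0$. Then for each $i=1,\dots,n-1$: (1) $a_i\ne a_{i+1}$; (2) if $a_i+a_{i+1}=(a_i-a_{i+1})^2$, then $\tau_i$ acts on $V(a_1,\dots,a_n)$ as the operator $\frac{\pi_i-\pi_{i+1}}{a_i-a_{i+1}}$; (3) if $a_i+a_{i+1}\ne(a_i-a_{i+1})^2$, then $V(a_1,\dots,a_{i-1},a_{i+1},a_i,a_{i+2},\dots,a_n)\ne 0$.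
   Context: $\mathfrak A_n$ is the $\mathbb Z_2$-graded $\mathbb C$-algebra generated by odd elements $\tau_1,\dots,\tau_{n-1}$ with relations $\tau_k^2=1$, $(\tau_k\tau_{k+1})^3=1$, $(\tau_k\tau_l)^2=-1$ for $|k-l|>1$. Set $\tau_{i,i+1}=\tau_i$, $\tau_{ij}=-\tau_{i,j-1}\tau_{j-1}\tau_{i,j-1}$ for $i<j-1$, $\tau_{ji}=-\tau_{ij}$, and $\pi_m=\sum_{j<m}\tau_{jm}$ ($\pi_1=0$). $\mathcal C_k$ is the Clifford algebra with odd generators $p_1,\dots,p_k$, $p_j^2=1$, $p_jp_l=-p_lp_j$ ($j\ne l$). The graded tensor product has multiplication $(a\otimes b)(a'\otimes b')=(-1)^{p(b)p(a')}aa'\otimes bb'$; $\mathfrak A_n$ is identified with $1\otimes\mathfrak A_n$. A simple graded module has no graded submodules other than $0$ and itself. *)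

theory Defs
  imports Complex_Main
begin

text \<open>A module V over the graded tensor product C_k (x) A_n is modelled as a complex
vector space (carrier = the type 'v, scalar multiplication smul) with a Z2-grading
V = V0 (+) V1, together with the odd linear operators P j (action of p_j (x) 1, j = 1..k)
and T i (action of 1 (x) tau_i, i = 1..n-1) satisfying the defining relations of
C_k, of A_n, and the sign rule of the graded tensor product
(p_j (x) 1)(1 (x) tau_i) = - (1 (x) tau_i)(p_j (x) 1).\<close>

text \<open>tauD T i d is the operator tau_{i,i+d} (d >= 1):
tau_{i,i+1} = tau_i, tau_{ij} = - tau_{i,j-1} tau_{j-1} tau_{i,j-1}.\<close>
fun tauD :: "(nat \<Rightarrow> 'v \<Rightarrow> 'v::ab_group_add) \<Rightarrow> nat \<Rightarrow> nat \<Rightarrow> 'v \<Rightarrow> 'v" where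
  "tauD T i 0 = (\<lambda>v. 0)"
| "tauD T i (Suc 0) = T i"
| "tauD T i (Suc (Suc d)) =
     (\<lambda>v. - tauD T i (Suc d) (T (i + Suc d) (tauD T i (Suc d) v)))"

definition tau_op :: "(nat \<Rightarrow> 'v \<Rightarrow> 'v::ab_group_add) \<Rightarrow> nat \<Rightarrow> nat \<Rightarrow> 'v \<Rightarrow> 'v" where
  "tau_op T i j = tauD T i (j - i)"

definition pi_op :: "(nat \<Rightarrow> 'v \<Rightarrow> 'v::ab_group_add) \<Rightarrow> nat \<Rightarrow> 'v \<Rightarrow> 'v" where
  "pi_op T m = (\<lambda>v. \<Sum>j\<in>{1..<m}. tau_op T j m v)"

definition graded_module ::
  "(complex \<Rightarrow> 'v \<Rightarrow> 'v::ab_group_add) \<Rightarrow> 'v set \<Rightarrow> 'v set \<Rightarrow> nat \<Rightarrow> nat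
    \<Rightarrow> (nat \<Rightarrow> 'v \<Rightarrow> 'v) \<Rightarrow> (nat \<Rightarrow> 'v \<Rightarrow> 'v) \<Rightarrow> bool" where
  "graded_module smul V0 V1 k n P T \<longleftrightarrow>
     vector_space smul \<and>
     module.subspace smul V0 \<and> module.subspace smul V1 \<and> V0 \<inter> V1 = {0} \<and>
     (\<forall>v. \<exists>v0\<in>V0. \<exists>v1\<in>V1. v = v0 + v1) \<and>
     (\<forall>j\<in>{1..k}. Vector_Spaces.linear smul smul (P j) \<and> P j ` V0 \<subseteq> V1 \<and> P j ` V1 \<subseteq> V0) \<and>
     (\<forall>i\<in>{1..<n}. Vector_Spaces.linear smul smul (T i) \<and> T i ` V0 \<subseteq> V1 \<and> T i ` V1 \<subseteq> V0) \<and>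
     (\<forall>j\<in>{1..k}. \<forall>v. P j (P j v) = v) \<and>
     (\<forall>j\<in>{1..k}. \<forall>l\<in>{1..k}. j \<noteq> l \<longrightarrow> (\<forall>v. P j (P l v) = - P l (P j v))) \<and>
     (\<forall>i\<in>{1..<n}. \<forall>v. T i (T i v) = v) \<and>
     (\<forall>i. 1 \<le> i \<and> i + 1 < n \<longrightarrow> (\<forall>v. ((T i \<circ> T (i+1)) ^^ 3) v = v)) \<and>
     (\<forall>i\<in>{1..<n}. \<forall>l\<in>{1..<n}. (i + 1 < l \<or> l + 1 < i) \<longrightarrow>
         (\<forall>v. T i (T l (T i (T l v))) = - v)) \<and>
     (\<forall>j\<in>{1..k}. \<forall>i\<in>{1..<n}. \<forall>v. P j (T i v) = - T i (P j v))"

definition graded_submodule ::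
  "(complex \<Rightarrow> 'v \<Rightarrow> 'v::ab_group_add) \<Rightarrow> 'v set \<Rightarrow> 'v set \<Rightarrow> nat \<Rightarrow> nat
    \<Rightarrow> (nat \<Rightarrow> 'v \<Rightarrow> 'v) \<Rightarrow> (nat \<Rightarrow> 'v \<Rightarrow> 'v) \<Rightarrow> 'v set \<Rightarrow> bool" where
  "graded_submodule smul V0 V1 k n P T W \<longleftrightarrow>
     module.subspace smul W \<and>
     (\<forall>j\<in>{1..k}. P j ` W \<subseteq> W) \<and> (\<forall>i\<in>{1..<n}. T i ` W \<subseteq> W) \<and>
     (\<forall>w\<in>W. \<exists>w0\<in>W \<inter> V0. \<exists>w1\<in>W \<inter> V1. w = w0 + w1)"

definition simple_graded_module ::
  "(complex \<Rightarrow> 'v \<Rightarrow> 'v::ab_group_add) \<Rightarrow> 'v set \<Rightarrow> 'v set \<Rightarrow> nat \<Rightarrow> nat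
    \<Rightarrow> (nat \<Rightarrow> 'v \<Rightarrow> 'v) \<Rightarrow> (nat \<Rightarrow> 'v \<Rightarrow> 'v) \<Rightarrow> bool" where
  "simple_graded_module smul V0 V1 k n P T \<longleftrightarrow>
     graded_module smul V0 V1 k n P T \<and> (UNIV :: 'v set) \<noteq> {0} \<and>
     (\<forall>W. graded_submodule smul V0 V1 k n P T W \<longrightarrow> W = {0} \<or> W = UNIV)"

definition pi_eigenspace ::
  "(complex \<Rightarrow> 'v \<Rightarrow> 'v::ab_group_add) \<Rightarrow> nat \<Rightarrow> (nat \<Rightarrow> 'v \<Rightarrow> 'v) \<Rightarrow> (nat \<Rightarrow> complex) \<Rightarrow> 'v set" where
  "pi_eigenspace smul n T a = {v. \<forall>m\<in>{1..n}. pi_op T m (pi_op T m v) = smul (a m) v}"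

end

theory Submission
  imports Defs
begin

(*
  Write x = pi_i, y = pi_(i+1) and t = tau_i.  From the defining relations of A_n alone we derive

     t x + y t = 1,     x y = - y x,     t pi_m = - pi_m t  (m \<noteq> i, i+1),
     pi_l pi_m = - pi_m pi_l  (l \<noteq> m),

  so the pi_m^2 commute with each other, with x, y, and (for m \<noteq> i, i+1) with t.
  For a common eigenvector v of weight a and c = 1/(a_i - a_(i+1)) the "exchange vector"
  w = t v - c (x - y) v has the weight with a_i, a_(i+1) swapped, and
  t w = (1 - c^2 (a_i + a_(i+1))) v - c (x - y) w; this gives part (3).
  Parts (1) and (2) need semisimplicity, but V need not be finite-dimensional.  We show that
  the group generated by the tau_i and -1 is finite (normal forms built from the coset
  representatives T_(m-d+1) ... T_m), so averaging a Hermitian form over it yields, around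
  every vector, a finite-dimensional tau-stable subspace with a positive definite form for
  which all pi_m are self-adjoint; orthogonality of weight vectors then proves (1) and (2).
*)

locale spin_relations =
  fixes smul :: "complex \<Rightarrow> 'v::ab_group_add \<Rightarrow> 'v" and n :: nat and T :: "nat \<Rightarrow> 'v \<Rightarrow> 'v"
  assumes vector_space: "vector_space smul"
    and T_linear: "\<And>i. i \<in> {1..<n} \<Longrightarrow> Vector_Spaces.linear smul smul (T i)"
    and T_involution: "\<And>i v. i \<in> {1..<n} \<Longrightarrow> T i (T i v) = v"
    and T_braid: "\<And>i v. 1 \<le> i \<Longrightarrow> i + 1 < n \<Longrightarrow> T i (T (i+1) (T i v)) = T (i+1) (T i (T (i+1) v))"
    and T_far: "\<And>i l v. i \<in> {1..<n} \<Longrightarrow> l \<in> {1..<n} \<Longrightarrow> i + 1 < l \<or> l + 1 < i \<Longrightarrow>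
                  T i (T l v) = - T l (T i v)"

text \<open>Every graded A_n-module (in particular every graded C_k (x) A_n-module) satisfies them;
  the braid relation follows from (tau_i tau_(i+1))^3 = 1 and tau_i^2 = 1.\<close>
lemma graded_module_spin_relations:
  assumes "graded_module smul V0 V1 k n P T"
  shows "spin_relations smul n T"
proof -
  note D = assms[unfolded graded_module_def]
  have vs: "vector_space smul"
    using D by (elim conjE) assumption
  have lin: "\<forall>i\<in>{1..<n}. Vector_Spaces.linear smul smul (T i) \<and> T i ` V0 \<subseteq> V1 \<and> T i ` V1 \<subseteq> V0"
    using D by (elim conjE) assumption
  have inv: "\<forall>i\<in>{1..<n}. \<forall>v. T i (T i v) = v"
    using D by (elim conjE) assumption
  have cube: "\<forall>i. 1 \<le> i \<and> i + 1 < n \<longrightarrow> (\<forall>v. ((T i \<circ> T (i+1)) ^^ 3) v = v)"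
    using D by (elim conjE) assumption
  have far: "\<forall>i\<in>{1..<n}. \<forall>l\<in>{1..<n}. (i + 1 < l \<or> l + 1 < i) \<longrightarrow>
               (\<forall>v. T i (T l (T i (T l v))) = - v)"
    using D by (elim conjE) assumption
  show ?thesis
  proof (rule spin_relations.intro)
    show "T i (T (i+1) (T i v)) = T (i+1) (T i (T (i+1) v))" if i: "1 \<le> i" "i + 1 < n" for i v
    proof -
      have "((T i \<circ> T (i+1)) ^^ 3) (T (i+1) (T i (T (i+1) v))) = T (i+1) (T i (T (i+1) v))"
        using cube i by blast
      then show ?thesis using inv i by (simp add: numeral_3_eq_3)
    qed
    show "T i (T l v) = - T l (T i v)"
      if il: "i \<in> {1..<n}" "l \<in> {1..<n}" "i + 1 < l \<or> l + 1 < i" for i l v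
    proof -
      have "T i (T l (T i (T l (T l (T i v))))) = - T l (T i v)" using far il by blast
      then show ?thesis using inv il by simp
    qed
  qed (use vs lin inv in blast)+
qed

context spin_relations
begin

sublocale vs: vector_space smul by (rule vector_space)

text \<open>Additive and homogeneous maps; a lightweight stand-in for linearity that composes freely.\<close>
definition lin :: "('v \<Rightarrow> 'v) \<Rightarrow> bool" where
  "lin f \<longleftrightarrow> (\<forall>u w. f (u + w) = f u + f w) \<and> (\<forall>c u. f (smul c u) = smul c (f u))"

lemma lin_add: "lin f \<Longrightarrow> f (u + w) = f u + f w" by (simp add: lin_def)
lemma lin_scale: "lin f \<Longrightarrow> f (smul c u) = smul c (f u)" by (simp add: lin_def)
lemma lin_zero: "lin f \<Longrightarrow> f 0 = 0"
  using lin_add[of f 0 0] by simp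
lemma lin_neg: "lin f \<Longrightarrow> f (- u) = - f u"
  using lin_add[of f u "- u"] lin_zero[of f] by (metis add.commute add_eq_0_iff2)
lemma lin_diff: "lin f \<Longrightarrow> f (u - w) = f u - f w"
  using lin_add[of f u "- w"] lin_neg[of f w] by simp
lemma lin_sum: "lin f \<Longrightarrow> f (\<Sum>j\<in>S. g j) = (\<Sum>j\<in>S. f (g j))"
  by (induction S rule: infinite_finite_induct) (auto simp: lin_zero lin_add)

lemma lin_id: "lin id" by (simp add: lin_def)
lemma lin_comp: "lin f \<Longrightarrow> lin g \<Longrightarrow> lin (f \<circ> g)" by (simp add: lin_def)
lemma lin_uminus: "lin f \<Longrightarrow> lin (\<lambda>v. - f v)" by (simp add: lin_def)
lemma lin_sumf: "(\<And>j. j \<in> S \<Longrightarrow> lin (f j)) \<Longrightarrow> lin (\<lambda>v. \<Sum>j\<in>S. f j v)"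
proof (induction S rule: infinite_finite_induct)
  case (insert j S)
  then show ?case
    using vector_space by (simp add: lin_def vector_space_def algebra_simps)
qed (simp_all add: lin_def)

lemma lin_T: "i \<in> {1..<n} \<Longrightarrow> lin (T i)"
  using T_linear[of i] unfolding lin_def Vector_Spaces.linear_iff by blast

lemma T_neg: "i \<in> {1..<n} \<Longrightarrow> T i (- u) = - T i u"
  using lin_neg[OF lin_T] .

abbreviation tau :: "nat \<Rightarrow> nat \<Rightarrow> 'v \<Rightarrow> 'v" where "tau a d \<equiv> tauD T a d"

lemma tau_Suc_Suc: "tau a (Suc (Suc d)) v = - tau a (Suc d) (T (a + Suc d) (tau a (Suc d) v))"
  by simp

declare tauD.simps(3) [simp del]

lemma lin_tau: "1 \<le> a \<Longrightarrow> a + d \<le> n \<Longrightarrow> lin (tau a d)"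
proof (induction d rule: induct_nat_012)
  case 0
  show ?case by (simp add: lin_def)
next
  case 1
  then show ?case by (simp add: lin_T)
next
  case (ge2 d)
  have "lin (tau a (Suc d))" "lin (T (a + Suc d))" using ge2 by (auto intro: lin_T)
  then have "lin (\<lambda>v. - (tau a (Suc d) \<circ> T (a + Suc d) \<circ> tau a (Suc d)) v)"
    by (intro lin_uminus lin_comp)
  moreover have "tau a (Suc (Suc d)) = (\<lambda>v. - (tau a (Suc d) \<circ> T (a + Suc d) \<circ> tau a (Suc d)) v)"
    by (simp add: fun_eq_iff tau_Suc_Suc)
  ultimately show ?case by simp
qed

lemma tau_neg: "1 \<le> a \<Longrightarrow> a + d \<le> n \<Longrightarrow> tau a d (- u) = - tau a d u"
  using lin_neg[OF lin_tau] .

lemma tau_involution: "1 \<le> a \<Longrightarrow> 1 \<le> d \<Longrightarrow> a + d \<le> n \<Longrightarrow> tau a d (tau a d u) = u"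
proof (induction d arbitrary: u rule: induct_nat_012)
  case (ge2 d)
  have "tau a (Suc d) (- w) = - tau a (Suc d) w" for w using ge2 by (intro tau_neg) auto
  moreover have "T (Suc (a + d)) (- w) = - T (Suc (a + d)) w" for w using ge2 by (intro T_neg) auto
  moreover have "T (Suc (a + d)) (T (Suc (a + d)) w) = w" for w using ge2 by (intro T_involution) auto
  ultimately show ?case using ge2 by (simp add: tau_Suc_Suc)
qed (simp_all add: T_involution)

lemma tau_anticommute:
  assumes "lin Y" "\<And>k u. k \<in> {a..<a+d} \<Longrightarrow> T k (Y u) = - Y (T k u)" "1 \<le> a" "a + d \<le> n"
  shows "tau a d (Y u) = - Y (tau a d u)"
  using assms(2-4)
proof (induction d arbitrary: u rule: induct_nat_012)
  case 0
  then show ?case by (simp add: lin_zero[OF assms(1)])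
next
  case (ge2 d)
  have "tau a (Suc d) (- w) = - tau a (Suc d) w" for w using ge2 by (intro tau_neg) auto
  moreover have "T (Suc (a + d)) (- w) = - T (Suc (a + d)) w" for w using ge2 by (intro T_neg) auto
  moreover have "tau a (Suc d) (Y w) = - Y (tau a (Suc d) w)" for w using ge2 by auto
  moreover have "T (Suc (a + d)) (Y w) = - Y (T (Suc (a + d)) w)" for w using ge2 by auto
  ultimately show ?case by (simp add: tau_Suc_Suc lin_neg[OF assms(1)])
qed simp

lemma T_tau_far:
  "i \<in> {1..<n} \<Longrightarrow> 1 \<le> a \<Longrightarrow> a + d \<le> n \<Longrightarrow> i + 1 < a \<or> a + d < i \<Longrightarrow>
   tau a d (T i u) = - T i (tau a d u)"
  by (rule tau_anticommute[OF lin_T]) (auto intro!: T_far)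

lemma tau_braid:
  "1 \<le> j \<Longrightarrow> 1 \<le> d \<Longrightarrow> j + d < n \<Longrightarrow>
   tau j d (T (j+d) (tau j d u)) = T (j+d) (tau j d (T (j+d) u))"
proof (induction d arbitrary: u rule: induct_nat_012)
  case 1
  then show ?case using T_braid[of j u] by simp
next
  case (ge2 d)
  define i where "i = j + Suc d"
  define A where "A = tau j (Suc d)"
  define s where "s = T i"
  define t where "t = T (i+1)"
  have i: "i \<in> {1..<n}" "i+1 \<in> {1..<n}" using ge2 by (auto simp: i_def)
  have nA: "A (- w) = - A w" for w unfolding A_def using ge2 by (intro tau_neg) auto
  have ns: "s (- w) = - s w" and nt: "t (- w) = - t w" for w
    unfolding s_def t_def using i by (auto intro: T_neg)
  have At: "A (t w) = - t (A w)" for w unfolding A_def t_def using ge2 i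
    by (intro T_tau_far) (auto simp: i_def)
  have sts: "s (t (s w)) = t (s (t w))" for w unfolding s_def t_def using T_braid[of i w] i by auto
  have AsA: "A (s (A w)) = s (A (s w))" for w unfolding A_def s_def i_def using ge2 by auto
  have tt: "t (t w) = w" for w unfolding t_def using i T_involution by auto
  have tau2: "tau j (Suc (Suc d)) w = - s (A (s w))" for w
    by (simp only: tau_Suc_Suc AsA flip: A_def s_def i_def)
  have "tau j (Suc (Suc d)) (t (tau j (Suc (Suc d)) u)) = s (A (s (t (s (A (s u))))))"
    by (simp add: tau2 nA ns nt)
  also have "\<dots> = s (A (t (s (t (A (s u))))))" by (simp add: sts)
  also have "\<dots> = s (t (A (s (A (t (s u))))))" by (simp add: At nA ns nt)
  also have "\<dots> = s (t (s (A (s (t (s u))))))" by (simp add: AsA)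
  also have "\<dots> = t (s (t (A (t (s (t u))))))" by (simp add: sts)
  also have "\<dots> = - t (s (A (s (t u))))" by (simp add: At nA ns nt tt)
  also have "\<dots> = t (tau j (Suc (Suc d)) (t u))" by (simp add: tau2 nt)
  finally show ?case by (simp add: t_def i_def)
qed simp

lemma T_conj_tau_first:
  "1 \<le> k \<Longrightarrow> k + e + 2 \<le> n \<Longrightarrow> T k (tau k (Suc (Suc e)) (T k u)) = - tau (Suc k) (Suc e) u"
proof (induction e arbitrary: u)
  case 0
  then show ?case by (simp add: tau_Suc_Suc T_neg T_involution)
next
  case (Suc e)
  define Z where "Z = tau k (Suc (Suc e))"
  define Y where "Y = tau (Suc k) (Suc e)"
  define t where "t = T (k + Suc (Suc e))"
  have k: "k \<in> {1..<n}" "k + Suc (Suc e) \<in> {1..<n}" using Suc by auto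
  have nk: "T k (- w) = - T k w" and nt: "t (- w) = - t w" for w
    unfolding t_def using k by (auto intro: T_neg)
  have kk: "T k (T k w) = w" for w using k T_involution by auto
  have IH: "T k (Z (T k w)) = - Y w" for w unfolding Z_def Y_def using Suc by auto
  have kt: "T k (t w) = - t (T k w)" for w unfolding t_def using k by (intro T_far) auto
  have "T k (tau k (Suc (Suc (Suc e))) (T k u)) = - T k (Z (T k (T k (t (T k (T k (Z (T k u))))))))"
    unfolding Z_def t_def by (simp add: tau_Suc_Suc nk kk)
  also have "\<dots> = - (- Y (T k (t (T k (- Y u)))))" by (simp only: IH)
  also have "\<dots> = Y (t (Y u))" using Suc(2) by (simp add: kt nk nt kk tau_neg Y_def)
  also have "\<dots> = - tau (Suc k) (Suc (Suc e)) u" by (simp add: tau_Suc_Suc Y_def t_def)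
  finally show ?case .
qed

lemma T_conj_tau_inner:
  "1 \<le> a \<Longrightarrow> a < k \<Longrightarrow> k + 1 < a + d \<Longrightarrow> a + d \<le> n \<Longrightarrow> T k (tau a d (T k u)) = - tau a d u"
proof (induction d arbitrary: u rule: induct_nat_012)
  case (ge2 e)
  define Z where "Z = tau a (Suc e)"
  define t where "t = T (a + Suc e)"
  have k: "k \<in> {1..<n}" "a + Suc e \<in> {1..<n}" using ge2 by auto
  have nZ: "Z (- w) = - Z w" for w unfolding Z_def using ge2 by (intro tau_neg) auto
  have nk: "T k (- w) = - T k w" and nt: "t (- w) = - t w" for w
    unfolding t_def using k by (auto intro: T_neg)
  have kk: "T k (T k w) = w" for w using k T_involution by auto
  have tau2: "tau a (Suc (Suc e)) w = - Z (t (Z w))" for w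
    unfolding Z_def t_def by (simp add: tau_Suc_Suc)
  have unfold: "T k (tau a (Suc (Suc e)) (T k u)) = - T k (Z (T k (T k (t (T k (T k (Z (T k u))))))))"
    by (simp add: tau2 nk kk)
  show ?case
  proof (cases "a + Suc e = k + 1")
    case False
    (* T_k anticommutes with both factors of tau_(a,b) = - Z t Z, by induction and T_far *)
    then have "k + 1 < a + Suc e" using ge2 by auto
    then have IH: "T k (Z (T k w)) = - Z w" for w unfolding Z_def using ge2 by auto
    have kt: "T k (t w) = - t (T k w)" for w unfolding t_def using k \<open>k + 1 < a + Suc e\<close>
      by (intro T_far) auto
    have "- T k (Z (T k (T k (t (T k (T k (Z (T k u)))))))) = - (- Z (T k (t (T k (- Z u)))))"
      by (simp only: IH)
    also have "\<dots> = - tau a (Suc (Suc e)) u" by (simp add: kt nk nt kk nZ tau2)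
    finally show ?thesis unfolding unfold .
  next
    case True
    (* b = k + 2: Z = tau_(a,k+1) = - A T_k A = - T_k A T_k with A = tau_(a,k), which
       anticommutes with t = T_(k+1) *)
    then obtain f where f: "e = Suc f" "a + Suc f = k" using ge2 by (cases e) auto
    define A where "A = tau a (Suc f)"
    have nA: "A (- w) = - A w" for w unfolding A_def using ge2 f by (intro tau_neg) auto
    have AA: "A (A w) = w" for w unfolding A_def using ge2 f by (intro tau_involution) auto
    have br: "A (T k (A w)) = T k (A (T k w))" for w
      unfolding A_def using tau_braid[of a "Suc f" w] ge2 f by auto
    have Z1: "Z w = - A (T k (A w))" for w
      unfolding Z_def f(1) using f(2) by (simp add: tau_Suc_Suc A_def)
    have Z2: "Z w = - T k (A (T k w))" for w using Z1 br by simp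
    have At: "A (t w) = - t (A w)" for w
      unfolding A_def t_def using ge2 f k True by (intro T_tau_far) auto
    have "- T k (Z (T k (T k (t (T k (T k (Z (T k u)))))))) = - A (T k (t (T k (A u))))"
      by (simp add: Z2 nk kk nA nt)
    also have "\<dots> = Z (t (Z u))" by (simp add: Z1 nk nt nA AA At)
    also have "\<dots> = - tau a (Suc (Suc e)) u" by (simp add: tau2)
    finally show ?thesis unfolding unfold .
  qed
qed simp_all

abbreviation PI :: "nat \<Rightarrow> 'v \<Rightarrow> 'v" where "PI m \<equiv> pi_op T m"

lemma PI_expand: "PI m v = (\<Sum>j\<in>{1..<m}. tau j (m - j) v)"
  by (simp add: pi_op_def tau_op_def)

lemma lin_PI: "m \<le> n \<Longrightarrow> lin (PI m)"
  unfolding pi_op_def tau_op_def by (rule lin_sumf) (auto intro!: lin_tau)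

lemma PI_neg: "m \<le> n \<Longrightarrow> PI m (- u) = - PI m u"
  using lin_neg[OF lin_PI] .

text \<open>For m < i every summand of pi_m only involves generators far from T_i.\<close>
lemma T_PI_below: "i \<in> {1..<n} \<Longrightarrow> m < i \<Longrightarrow> T i (PI m u) = - PI m (T i u)"
proof -
  assume i: "i \<in> {1..<n}" and m: "m < i"
  have "PI m (T i u) = (\<Sum>j\<in>{1..<m}. - T i (tau j (m - j) u))"
    unfolding PI_expand by (rule sum.cong) (use i m in \<open>auto intro!: T_tau_far\<close>)
  also have "\<dots> = - T i (PI m u)"
    by (simp add: PI_expand lin_sum[OF lin_T[OF i]] sum_negf)
  finally show ?thesis by simp
qed

text \<open>For m > i + 1 conjugation by T_i permutes the summands of pi_m up to sign,
  exchanging the summands j = i and j = i + 1.\<close>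
lemma T_PI_above: "i \<in> {1..<n} \<Longrightarrow> i + 1 < m \<Longrightarrow> m \<le> n \<Longrightarrow> T i (PI m (T i u)) = - PI m u"
proof -
  assume i: "i \<in> {1..<n}" and m: "i + 1 < m" "m \<le> n"
  define g where "g j = tau j (m - j) u" for j
  define sw where "sw j = (if j = i then i + 1 else if j = i + 1 then i else j)" for j
  have lT: "lin (T i)" using i by (rule lin_T)
  have ii: "T i (T i w) = w" for w using i T_involution by auto
  define e where "e = m - i - 2"
  have e: "m - i = Suc (Suc e)" "m - Suc i = Suc e" using m unfolding e_def by arith+
  have first: "T i (tau i (m - i) (T i w)) = - tau (Suc i) (m - Suc i) w" for w
    unfolding e using i m e by (intro T_conj_tau_first) auto
  have summand: "T i (tau j (m - j) (T i u)) = - g (sw j)" if j: "j \<in> {1..<m}" for j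
  proof -
    consider "j < i" | "j = i" | "j = i + 1" | "i + 1 < j" by linarith
    then show ?thesis
    proof cases
      case 1
      then show ?thesis using i m j by (simp add: g_def sw_def T_conj_tau_inner)
    next
      case 2
      then show ?thesis using first by (simp add: g_def sw_def)
    next
      case 3
      have "T i (tau j (m - j) (T i u)) = - T i (T i (tau i (m - i) (T i (T i u))))"
        using 3 first[of "T i u"] lin_neg[OF lT] by simp
      then show ?thesis using 3 by (simp add: g_def sw_def ii)
    next
      case 4
      have "tau j (m - j) (T i u) = - T i (tau j (m - j) u)"
        using i m j 4 by (intro T_tau_far) auto
      then show ?thesis using 4 lin_neg[OF lT] by (simp add: g_def sw_def ii)
    qed
  qed
  have "T i (PI m (T i u)) = (\<Sum>j\<in>{1..<m}. - g (sw j))"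
    by (simp add: PI_expand lin_sum[OF lT] summand)
  also have "\<dots> = - (\<Sum>j\<in>{1..<m}. g j)"
    unfolding sum_negf
    by (rule arg_cong[where f=uminus], rule sum.reindex_bij_witness[of _ sw sw])
       (use i m in \<open>auto simp: sw_def\<close>)
  also have "\<dots> = - PI m u" by (simp add: PI_expand g_def)
  finally show ?thesis .
qed

lemma T_PI_anticommute:
  "i \<in> {1..<n} \<Longrightarrow> m \<le> n \<Longrightarrow> m \<noteq> i \<Longrightarrow> m \<noteq> i + 1 \<Longrightarrow> T i (PI m u) = - PI m (T i u)"
proof (cases "m < i")
  case False
  assume i: "i \<in> {1..<n}" and m: "m \<le> n" "m \<noteq> i" "m \<noteq> i + 1"
  then have "T i (PI m (T i (T i u))) = - PI m (T i u)" using False by (intro T_PI_above) auto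
  then show ?thesis using i T_involution by simp
qed (rule T_PI_below)

lemma T_PI_exchange: "i \<in> {1..<n} \<Longrightarrow> T i (PI i u) + PI (i+1) (T i u) = u"
proof -
  assume i: "i \<in> {1..<n}"
  have lT: "lin (T i)" using i by (rule lin_T)
  have ii: "T i (T i w) = w" for w using i T_involution by auto
  have summand: "tau j (Suc i - j) (T i u) = - T i (tau j (i - j) u)" if j: "j \<in> {1..<i}" for j
  proof -
    obtain e where e: "i - j = Suc e" using j by (metis Suc_diff_Suc atLeastLessThan_iff)
    have ie: "Suc i - j = Suc (Suc e)" and je: "j + Suc e = i" using e j by auto
    have br: "tau j (Suc e) (T i (tau j (Suc e) w)) = T i (tau j (Suc e) (T i w))" for w
      using tau_braid[of j "Suc e" w] je j i by auto
    have "tau j (Suc i - j) (T i u) = - tau j (Suc e) (T i (tau j (Suc e) (T i u)))"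
      unfolding ie tau_Suc_Suc je ..
    also have "\<dots> = - T i (tau j (i - j) u)" by (simp add: br ii e)
    finally show ?thesis .
  qed
  have "{1..<i+1} = insert i {1..<i}" using i by auto
  then have "PI (i+1) (T i u) = (\<Sum>j\<in>{1..<i}. tau j (i + 1 - j) (T i u)) + tau i 1 (T i u)"
    unfolding PI_expand by (simp add: add.commute)
  also have "\<dots> = (\<Sum>j\<in>{1..<i}. - T i (tau j (i - j) u)) + u"
    by (simp add: summand ii)
  also have "\<dots> = - T i (PI i u) + u"
    by (simp add: PI_expand lin_sum[OF lT] sum_negf)
  finally show ?thesis by simp
qed

text \<open>The pi_m pairwise anticommute: every summand of pi_l anticommutes with pi_m, l < m.\<close>
lemma PI_anticommute: "l < m \<Longrightarrow> m \<le> n \<Longrightarrow> PI l (PI m u) = - PI m (PI l u)"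
proof -
  assume lm: "l < m" "m \<le> n"
  have lP: "lin (PI m)" using lm by (intro lin_PI)
  have "PI l (PI m u) = (\<Sum>j\<in>{1..<l}. - PI m (tau j (l - j) u))"
    unfolding PI_expand[of l]
  proof (rule sum.cong[OF refl])
    fix j assume j: "j \<in> {1..<l}"
    show "tau j (l - j) (PI m u) = - PI m (tau j (l - j) u)"
    proof (rule tau_anticommute[OF lP])
      show "T k (PI m w) = - PI m (T k w)" if "k \<in> {j..<j + (l - j)}" for k w
        using that j lm by (intro T_PI_anticommute) auto
    qed (use j lm in auto)
  qed
  also have "\<dots> = - PI m (PI l u)" by (simp only: sum_negf lin_sum[OF lP] PI_expand[of l])
  finally show ?thesis .
qed

lemma T_PI_sq_commute:
  "i \<in> {1..<n} \<Longrightarrow> m \<le> n \<Longrightarrow> m \<noteq> i \<Longrightarrow> m \<noteq> Suc i \<Longrightarrow> PI m (PI m (T i u)) = T i (PI m (PI m u))"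
  using T_PI_anticommute[of i m] lin_neg[OF lin_PI[of m]] by simp

lemma PI_sq_commute: "l \<le> n \<Longrightarrow> m \<le> n \<Longrightarrow> PI m (PI m (PI l u)) = PI l (PI m (PI m u))"
  by (cases l m rule: linorder_cases) (simp_all add: PI_anticommute PI_neg)

text \<open>The vector t v - (x - y) v / (alpha - beta), which exchanges the weights of x^2 and y^2.\<close>
definition exchange_vector :: "nat \<Rightarrow> complex \<Rightarrow> complex \<Rightarrow> 'v \<Rightarrow> 'v" where
  "exchange_vector i \<alpha> \<beta> v = T i v - smul (1 / (\<alpha> - \<beta>)) (PI i v - PI (Suc i) v)"

context
  fixes i assumes i: "i \<in> {1..<n}"
begin

lemma lin_local: "lin (T i)" "lin (PI i)" "lin (PI (Suc i))"
  using i by (auto intro: lin_T lin_PI)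

lemma exchange_left: "PI (Suc i) (T i u) = u - T i (PI i u)"
  using T_PI_exchange[OF i, of u] by (simp add: eq_diff_eq add.commute)

lemma exchange_right: "PI i (T i u) = u - T i (PI (Suc i) u)"
proof -
  have "T i (T i (PI i (T i u)) + PI (Suc i) u) = T i (T i u)"
    using T_PI_exchange[OF i, of "T i u"] i T_involution by simp
  then have "PI i (T i u) + T i (PI (Suc i) u) = u" using i T_involution by (simp add: lin_add[OF lin_local(1)])
  then show ?thesis by (simp add: eq_diff_eq)
qed

lemma x_sq_T: "PI i (PI i (T i u)) = PI i u - PI (Suc i) u + T i (PI (Suc i) (PI (Suc i) u))"
  by (simp add: exchange_right lin_diff[OF lin_local(2)])

lemma y_sq_T: "PI (Suc i) (PI (Suc i) (T i u)) = PI (Suc i) u - PI i u + T i (PI i (PI i u))"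
  by (simp add: exchange_left lin_diff[OF lin_local(3)])

lemma T_diff: "T i (PI i u - PI (Suc i) u) = PI i (T i u) - PI (Suc i) (T i u)"
  by (simp add: exchange_left exchange_right lin_diff[OF lin_local(1)])

lemma diff_sq: "PI i (PI i u - PI (Suc i) u) - PI (Suc i) (PI i u - PI (Suc i) u) =
   PI i (PI i u) + PI (Suc i) (PI (Suc i) u)"
  using PI_anticommute[of i "Suc i"] i
  by (simp add: lin_diff[OF lin_local(2)] lin_diff[OF lin_local(3)])

lemma diff_weights:
  assumes "PI i (PI i p) = smul \<alpha> p" and "PI (Suc i) (PI (Suc i) p) = smul \<beta> p"
  shows "PI i (PI i (PI i p - PI (Suc i) p)) = smul \<alpha> (PI i p - PI (Suc i) p)"
    "PI (Suc i) (PI (Suc i) (PI i p - PI (Suc i) p)) = smul \<beta> (PI i p - PI (Suc i) p)"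
  using lin_local i assms PI_sq_commute[of "Suc i" i p] PI_sq_commute[of i "Suc i" p]
  by (simp_all add: lin_diff lin_scale vs.scale_right_diff_distrib)

lemma exchange_vector_weights:
  assumes xv: "PI i (PI i v) = smul \<alpha> v" and yv: "PI (Suc i) (PI (Suc i) v) = smul \<beta> v"
    and ab: "\<alpha> \<noteq> \<beta>" and w: "w = exchange_vector i \<alpha> \<beta> v"
  shows "PI i (PI i w) = smul \<beta> w" "PI (Suc i) (PI (Suc i) w) = smul \<alpha> w"
    "T i w = smul (1 - (\<alpha> + \<beta>) / (\<alpha> - \<beta>)^2) v - smul (1 / (\<alpha> - \<beta>)) (PI i w - PI (Suc i) w)"
proof -
  define c where "c = 1 / (\<alpha> - \<beta>)"
  note L = lin_local
  define u where "u = PI i v - PI (Suc i) v"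
  have w': "w = T i v - smul c u" unfolding w exchange_vector_def c_def u_def ..
  have xu: "PI i (PI i u) = smul \<alpha> u" and yu: "PI (Suc i) (PI (Suc i) u) = smul \<beta> u"
    unfolding u_def using diff_weights[OF xv yv] by auto
  have c1: "c * \<alpha> = 1 + \<beta> * c" and c2: "c * \<beta> = \<alpha> * c - 1"
    using ab by (simp_all add: c_def field_simps)
  have "PI i (PI i w) = u + smul \<beta> (T i v) - smul (c * \<alpha>) u"
    unfolding w' by (simp add: lin_diff[OF L(2)] lin_scale[OF L(2)] x_sq_T yv lin_scale[OF L(1)] xu
        u_def[symmetric])
  also have "\<dots> = smul \<beta> w"
    unfolding c1 w' by (simp add: algebra_simps)
  finally show "PI i (PI i w) = smul \<beta> w" .
  have "PI (Suc i) (PI (Suc i) w) = - u + smul \<alpha> (T i v) - smul (c * \<beta>) u"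
    unfolding w' by (simp add: lin_diff[OF L(3)] lin_scale[OF L(3)] y_sq_T xv lin_scale[OF L(1)] yu)
      (simp add: u_def)
  also have "\<dots> = smul \<alpha> w"
    unfolding c2 w' by (simp add: algebra_simps)
  finally show "PI (Suc i) (PI (Suc i) w) = smul \<alpha> w" .
  have tv: "T i v = w + smul c u" unfolding w' by simp
  have cc: "c * c * (\<alpha> + \<beta>) = (\<alpha> + \<beta>) / (\<alpha> - \<beta>)^2" by (simp add: c_def power2_eq_square)
  have "T i w = T i (T i v) - smul c (T i u)"
    unfolding w' by (simp add: lin_diff[OF L(1)] lin_scale[OF L(1)])
  also have "\<dots> = v - smul c (PI i (T i v) - PI (Suc i) (T i v))"
    unfolding u_def T_diff using T_involution i by simp
  also have "\<dots> = v - smul c ((PI i w - PI (Suc i) w) + smul c (PI i u - PI (Suc i) u))"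
    unfolding tv by (simp add: lin_add[OF L(2)] lin_add[OF L(3)] lin_scale[OF L(2)] lin_scale[OF L(3)]
        algebra_simps)
  also have "PI i u - PI (Suc i) u = smul (\<alpha> + \<beta>) v"
    unfolding u_def diff_sq xv yv by (simp add: vs.scale_left_distrib)
  finally show "T i w = smul (1 - (\<alpha> + \<beta>) / (\<alpha> - \<beta>)^2) v - smul (1 / (\<alpha> - \<beta>)) (PI i w - PI (Suc i) w)"
    unfolding c_def[symmetric] cc[symmetric]
    by (simp add: algebra_simps)
qed

text \<open>The other weights are unchanged, since pi_m^2 commutes with t, x and y.\<close>
lemma exchange_vector_other_weight:
  assumes m: "m \<le> n" "m \<noteq> i" "m \<noteq> Suc i" and mv: "PI m (PI m v) = smul \<gamma> v"
  shows "PI m (PI m (exchange_vector i \<alpha> \<beta> v)) = smul \<gamma> (exchange_vector i \<alpha> \<beta> v)"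
proof -
  have lm: "lin (PI m)" using m by (intro lin_PI)
  have x: "PI m (PI m (PI i v)) = smul \<gamma> (PI i v)"
    using PI_sq_commute[of i m v] m i by (simp add: mv lin_scale[OF lin_local(2)])
  have y: "PI m (PI m (PI (Suc i) v)) = smul \<gamma> (PI (Suc i) v)"
    using PI_sq_commute[of "Suc i" m v] m i by (simp add: mv lin_scale[OF lin_local(3)])
  have t: "PI m (PI m (T i v)) = smul \<gamma> (T i v)"
    using m i by (simp add: T_PI_sq_commute mv lin_scale[OF lin_local(1)])
  show ?thesis unfolding exchange_vector_def
    by (simp add: lin_diff[OF lm] lin_scale[OF lm] x y t vs.scale_right_diff_distrib vs.scale_left_commute)
qed

end

lemma exchanged_weight_nonzero:
  assumes i: "i \<in> {1..<n}" and v: "v \<in> pi_eigenspace smul n T a" "v \<noteq> 0"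
    and ne: "a i \<noteq> a (Suc i)" and nc: "a i + a (Suc i) \<noteq> (a i - a (Suc i))^2"
  shows "pi_eigenspace smul n T (a(i := a (Suc i), Suc i := a i)) \<noteq> {0}"
proof -
  define w where "w = exchange_vector i (a i) (a (Suc i)) v"
  have ev: "PI m (PI m v) = smul (a m) v" if "m \<in> {1..n}" for m
    using v(1) that unfolding pi_eigenspace_def by auto
  have W: "PI i (PI i w) = smul (a (Suc i)) w" "PI (Suc i) (PI (Suc i) w) = smul (a i) w"
    "T i w = smul (1 - (a i + a (Suc i)) / (a i - a (Suc i))^2) v
       - smul (1 / (a i - a (Suc i))) (PI i w - PI (Suc i) w)"
    using exchange_vector_weights[OF i ev ev ne w_def] i by auto
  have "w \<noteq> 0"
  proof
    assume "w = 0"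
    then have "smul (1 - (a i + a (Suc i)) / (a i - a (Suc i))^2) v = 0"
      using W(3) lin_zero[OF lin_T[OF i]] lin_zero[OF lin_PI, of i] lin_zero[OF lin_PI, of "Suc i"] i
      by simp
    then have "(a i + a (Suc i)) / (a i - a (Suc i))^2 = 1" using v(2) by simp
    then show False using nc ne by (simp add: divide_eq_eq)
  qed
  moreover have "w \<in> pi_eigenspace smul n T (a(i := a (Suc i), Suc i := a i))"
    unfolding pi_eigenspace_def
  proof (intro CollectI ballI)
    fix m assume m: "m \<in> {1..n}"
    show "PI m (PI m w) = smul ((a(i := a (Suc i), Suc i := a i)) m) w"
      using W(1,2) exchange_vector_other_weight[OF i _ _ _ ev[OF m]] m unfolding w_def
      by (cases "m = i"; cases "m = Suc i") auto
  qed
  ultimately show ?thesis by auto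
qed

definition signed :: "bool \<Rightarrow> 'v \<Rightarrow> 'v" where "signed b x = (if b then - x else x)"

lemma lin_signed: "lin f \<Longrightarrow> f (signed b x) = signed b (f x)"
  by (simp add: signed_def lin_neg)

lemma signed_neg: "- signed b x = signed (\<not> b) x"
  by (simp add: signed_def)

text \<open>coset_rep m d = T_(m-d+1) \<circ> ... \<circ> T_m (for d \<le> m): coset representatives of the group
  generated by T_1, ..., T_(m-1) and -1 inside the one generated by T_1, ..., T_m and -1.\<close>
primrec coset_rep :: "nat \<Rightarrow> nat \<Rightarrow> 'v \<Rightarrow> 'v" where
  "coset_rep m 0 = id"
| "coset_rep m (Suc d) = T (m - d) \<circ> coset_rep m d"

lemma lin_coset_rep: "d \<le> m \<Longrightarrow> m < n \<Longrightarrow> lin (coset_rep m d)"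
  by (induction d) (auto intro!: lin_comp lin_T simp: lin_id)

lemma T_coset_rep_low: "1 \<le> i \<Longrightarrow> i < m - d \<Longrightarrow> d \<le> m \<Longrightarrow> m < n \<Longrightarrow>
  \<exists>b. \<forall>w. T i (coset_rep m d w) = signed b (coset_rep m d (T i w))"
proof (induction d)
  case 0
  then show ?case by (auto simp: signed_def intro: exI[of _ False])
next
  case (Suc d)
  then have "i < m - d" by linarith
  then obtain b where b: "\<And>w. T i (coset_rep m d w) = signed b (coset_rep m d (T i w))"
    using Suc by auto
  have lT: "lin (T (m - d))" using Suc by (intro lin_T) auto
  have "T i (coset_rep m (Suc d) w) = - T (m - d) (T i (coset_rep m d w))" for w
    using Suc by (simp, intro T_far) auto
  then have "T i (coset_rep m (Suc d) w) = signed (\<not> b) (coset_rep m (Suc d) (T i w))" for w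
    by (simp add: b lin_signed[OF lT] signed_neg)
  then show ?case by blast
qed

text \<open>Generators above the start of the representative are shifted down by one, up to sign;
  at the boundary this is the braid relation.\<close>
lemma T_coset_rep_high: "m - d + 1 < i \<Longrightarrow> i \<le> m \<Longrightarrow> d \<le> m \<Longrightarrow> m < n \<Longrightarrow>
  \<exists>b. \<forall>w. T i (coset_rep m d w) = signed b (coset_rep m d (T (i - 1) w))"
proof (induction d)
  case (Suc d)
  have lT: "lin (T (m - d))" using Suc by (intro lin_T) auto
  show ?case
  proof (cases "m - d + 1 < i")
    case True
    then obtain b where b: "\<And>w. T i (coset_rep m d w) = signed b (coset_rep m d (T (i - 1) w))"
      using Suc by auto
    have "T i (coset_rep m (Suc d) w) = - T (m - d) (T i (coset_rep m d w))" for w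
      using Suc True by (simp, intro T_far) auto
    then have "T i (coset_rep m (Suc d) w) = signed (\<not> b) (coset_rep m (Suc d) (T (i - 1) w))" for w
      by (simp add: b lin_signed[OF lT] signed_neg)
    then show ?thesis by blast
  next
    case False
    define k where "k = m - d"
    obtain d' where d': "d = Suc d'" using Suc False by (cases d) auto
    have ik: "i = k + 1" "m - d' = k + 1" "m - Suc d' = k"
      using False Suc.prems d' unfolding k_def by auto
    have k: "k \<in> {1..<n}" "k + 1 \<in> {1..<n}" "k < m - d'" "d' \<le> m"
      using Suc.prems False d' unfolding k_def by auto
    have lk: "lin (T k)" "lin (T (Suc k))" using k by (auto intro: lin_T)
    obtain b where b: "\<And>w. T k (coset_rep m d' w) = signed b (coset_rep m d' (T k w))"
      using T_coset_rep_low[of k m d'] k Suc.prems by auto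
    have "T i (coset_rep m (Suc d) w) = signed b (coset_rep m (Suc d) (T (i - 1) w))" for w
    proof -
      have "T i (coset_rep m (Suc d) w) = T (k+1) (T k (T (k+1) (coset_rep m d' w)))"
        by (simp add: ik d')
      also have "\<dots> = T k (T (k+1) (T k (coset_rep m d' w)))"
        using T_braid[of k "coset_rep m d' w"] k by auto
      also have "\<dots> = signed b (coset_rep m (Suc d) (T (i - 1) w))"
        by (simp add: b lin_signed[OF lk(1)] lin_signed[OF lk(2)] ik d')
      finally show ?thesis .
    qed
    then show ?thesis by blast
  qed
qed simp

lemma T_coset_rep:
  assumes "d \<le> m" "m < n" "i \<in> {1..m}"
  shows "(\<exists>d'\<le>m. T i \<circ> coset_rep m d = coset_rep m d') \<or>
    (\<exists>b. \<exists>j\<in>{1..<m}. T i \<circ> coset_rep m d = (\<lambda>w. signed b (coset_rep m d (T j w))))"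
proof -
  consider "i < m - d" | "i = m - d" | "i = m - d + 1" | "m - d + 1 < i" by linarith
  then show ?thesis
  proof cases
    case 1
    then obtain b where "\<And>w. T i (coset_rep m d w) = signed b (coset_rep m d (T i w))"
      using T_coset_rep_low[of i m d] assms by auto
    then show ?thesis using 1 assms
      by (intro disjI2 exI[of _ b] bexI[of _ i]) (auto simp: fun_eq_iff)
  next
    case 2
    then have "T i \<circ> coset_rep m d = coset_rep m (Suc d)" by simp
    moreover have "Suc d \<le> m" using 2 assms by auto
    ultimately show ?thesis by blast
  next
    case 3
    then obtain d' where d': "d = Suc d'" "i = m - d'" using assms by (cases d) auto
    then have "T i \<circ> coset_rep m d = coset_rep m d'"
      using assms by (auto simp: fun_eq_iff T_involution)
    then show ?thesis using d' assms by (intro disjI1 exI[of _ d']) simp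
  next
    case 4
    then obtain b where "\<And>w. T i (coset_rep m d w) = signed b (coset_rep m d (T (i - 1) w))"
      using T_coset_rep_high[of m d i] assms by auto
    then show ?thesis using 4 assms
      by (intro disjI2 exI[of _ b] bexI[of _ "i - 1"]) (auto simp: fun_eq_iff)
  qed
qed

primrec normal_forms :: "nat \<Rightarrow> ('v \<Rightarrow> 'v) set" where
  "normal_forms 0 = {id, uminus}"
| "normal_forms (Suc m) = (\<lambda>(d, h). coset_rep m d \<circ> h) ` ({..m} \<times> normal_forms m)"

lemma finite_normal_forms: "finite (normal_forms m)"
  by (induction m) auto

lemma lin_normal_forms: "m \<le> n \<Longrightarrow> g \<in> normal_forms m \<Longrightarrow> lin g"
proof (induction m arbitrary: g)
  case 0
  then show ?case using lin_uminus[OF lin_id] by (auto simp: lin_id comp_def)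
next
  case (Suc m)
  then show ?case by (auto intro!: lin_comp lin_coset_rep)
qed

lemma signed_coset_rep_normal_form:
  assumes "d \<le> m" "m < n" "h \<in> normal_forms m" "uminus \<circ> h \<in> normal_forms m"
  shows "(\<lambda>w. signed b (coset_rep m d (h w))) \<in> normal_forms (Suc m)"
proof -
  have "(\<lambda>w. signed b (coset_rep m d (h w))) = coset_rep m d \<circ> (if b then uminus \<circ> h else h)"
    using lin_coset_rep[OF assms(1,2)] by (auto simp: fun_eq_iff signed_def lin_neg)
  then show ?thesis
    using assms by (auto intro!: image_eqI[where x="(d, if b then uminus \<circ> h else h)"])
qed

lemma normal_forms_closed:
  "m \<le> n \<Longrightarrow> id \<in> normal_forms m \<and> (\<forall>g\<in>normal_forms m. uminus \<circ> g \<in> normal_forms m) \<and>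
     (\<forall>g\<in>normal_forms m. \<forall>i\<in>{1..<m}. T i \<circ> g \<in> normal_forms m)"
proof (induction m)
  case 0
  have "uminus \<circ> uminus = (id :: 'v \<Rightarrow> 'v)" by (auto simp: fun_eq_iff)
  then show ?case by auto
next
  case (Suc m)
  then have IH: "id \<in> normal_forms m" "\<And>g. g \<in> normal_forms m \<Longrightarrow> uminus \<circ> g \<in> normal_forms m"
      "\<And>g i. g \<in> normal_forms m \<Longrightarrow> i \<in> {1..<m} \<Longrightarrow> T i \<circ> g \<in> normal_forms m"
    and mn: "m < n" by (auto simp: id_def comp_def)
  have rep: "(\<lambda>w. signed b (coset_rep m d (h w))) \<in> normal_forms (Suc m)"
    if "d \<le> m" "h \<in> normal_forms m" for b d h
    using signed_coset_rep_normal_form[OF that(1) mn that(2) IH(2)[OF that(2)]] .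
  have T_mem: "T i \<circ> (coset_rep m d \<circ> h) \<in> normal_forms (Suc m)"
    if "d \<le> m" "h \<in> normal_forms m" "i \<in> {1..<Suc m}" for d h i
  proof -
    from T_coset_rep[of d m i] that mn
    consider d' where "d' \<le> m" "T i \<circ> coset_rep m d = coset_rep m d'"
      | b j where "j \<in> {1..<m}" "T i \<circ> coset_rep m d = (\<lambda>w. signed b (coset_rep m d (T j w)))"
      by fastforce
    then show ?thesis
    proof cases
      case 1
      have "T i \<circ> (coset_rep m d \<circ> h) = (\<lambda>w. signed False (coset_rep m d' (h w)))"
        unfolding comp_assoc[symmetric] 1(2) by (simp add: signed_def comp_def)
      then show ?thesis using rep[OF 1(1) that(2), of False] by simp
    next
      case (2 b j)
      have "T i \<circ> (coset_rep m d \<circ> h) = (\<lambda>w. signed b (coset_rep m d ((T j \<circ> h) w)))"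
        unfolding comp_assoc[symmetric] 2(2) by (simp add: comp_def)
      then show ?thesis using rep[OF that(1) IH(3)[OF that(2) 2(1)], of b] by simp
    qed
  qed
  have "id \<in> normal_forms (Suc m)" using rep[OF _ IH(1), of 0 False] by (simp add: signed_def id_def)
  moreover have "uminus \<circ> g \<in> normal_forms (Suc m)" if "g \<in> normal_forms (Suc m)" for g
    using that rep[of _ _ True] by (auto simp: signed_def comp_def)
  moreover have "T i \<circ> g \<in> normal_forms (Suc m)" if "g \<in> normal_forms (Suc m)" "i \<in> {1..<Suc m}" for g i
    using that T_mem by auto
  ultimately show ?case by blast
qed

inductive_set tau_group :: "('v \<Rightarrow> 'v) set" where
  id: "id \<in> tau_group"
| T: "g \<in> tau_group \<Longrightarrow> i \<in> {1..<n} \<Longrightarrow> T i \<circ> g \<in> tau_group"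
| neg: "g \<in> tau_group \<Longrightarrow> uminus \<circ> g \<in> tau_group"

lemma tau_group_normal_forms: "g \<in> tau_group \<Longrightarrow> g \<in> normal_forms n"
  by (induction rule: tau_group.induct) (use normal_forms_closed[of n] in \<open>auto simp: id_def comp_def\<close>)

lemma finite_tau_group: "finite tau_group"
  using finite_subset[OF _ finite_normal_forms[of n]] tau_group_normal_forms by blast

lemma lin_tau_group: "g \<in> tau_group \<Longrightarrow> lin g"
  using lin_normal_forms tau_group_normal_forms by blast

lemma tau_group_comp: "g \<in> tau_group \<Longrightarrow> h \<in> tau_group \<Longrightarrow> g \<circ> h \<in> tau_group"
  by (induction rule: tau_group.induct) (auto simp: comp_assoc intro: tau_group.intros)

lemma tau_group_right_T: "g \<in> tau_group \<Longrightarrow> i \<in> {1..<n} \<Longrightarrow> g \<circ> T i \<in> tau_group"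
  using tau_group_comp tau_group.T[OF tau_group.id] by fastforce

definition averaged_form :: "('v \<Rightarrow> 'v \<Rightarrow> complex) \<Rightarrow> 'v \<Rightarrow> 'v \<Rightarrow> complex" where
  "averaged_form bt u w = (\<Sum>g\<in>tau_group. bt (g u) (g w))"

lemma averaged_form_T:
  assumes i: "i \<in> {1..<n}"
  shows "averaged_form bt (T i u) w = averaged_form bt u (T i w)"
proof -
  have "averaged_form bt (T i u) w = (\<Sum>g\<in>tau_group. bt ((g \<circ> T i) u) ((g \<circ> T i) (T i w)))"
    unfolding averaged_form_def using T_involution[OF i] by simp
  also have "\<dots> = averaged_form bt u (T i w)"
    unfolding averaged_form_def
    by (rule sum.reindex_bij_witness[of _ "\<lambda>g. g \<circ> T i" "\<lambda>g. g \<circ> T i"])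
       (auto simp: comp_assoc tau_group_right_T[OF _ i] fun_eq_iff T_involution[OF i])
  finally show ?thesis .
qed

text \<open>... and keeps it definite: a vanishing average of nonnegative values vanishes at g = id.\<close>
lemma averaged_form_definite:
  assumes "\<And>u. bt u u = of_real (q u)" "\<And>u. q u \<ge> 0" and "averaged_form bt u u = 0"
  shows "q u = 0"
proof -
  have "complex_of_real (\<Sum>g\<in>tau_group. q (g u)) = 0"
    using assms(3) unfolding averaged_form_def assms(1) of_real_sum .
  then have "(\<Sum>g\<in>tau_group. q (g u)) = 0" by (simp only: of_real_eq_0_iff)
  then have "\<forall>g\<in>tau_group. q (g u) = 0"
    by (subst (asm) sum_nonneg_eq_0_iff[OF finite_tau_group]) (auto intro: assms(2))
  then show ?thesis using tau_group.id by fastforce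
qed

definition orbit_span :: "'v \<Rightarrow> 'v set" where
  "orbit_span v0 = vs.span ((\<lambda>g. g v0) ` tau_group)"

lemma orbit_span_invariant:
  assumes g: "g \<in> tau_group" and u: "u \<in> orbit_span v0"
  shows "g u \<in> orbit_span v0"
proof -
  have lg: "lin g" using g by (rule lin_tau_group)
  from u[unfolded orbit_span_def] show ?thesis
  proof (induction rule: vs.span_induct_alt)
    case base
    then show ?case by (simp add: lin_zero[OF lg] orbit_span_def vs.span_zero)
  next
    case (step c x y)
    then obtain h where h: "h \<in> tau_group" "x = h v0" by auto
    have "g x \<in> (\<lambda>g. g v0) ` tau_group"
      using h tau_group_comp[OF g h(1)] by (auto intro!: image_eqI[where x="g \<circ> h"])
    then have "g x \<in> orbit_span v0"
      unfolding orbit_span_def by (rule vs.span_base)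
    then show ?case using step
      by (simp add: lin_add[OF lg] lin_scale[OF lg] orbit_span_def vs.span_add vs.span_scale)
  qed
qed

lemma in_orbit_span: "v0 \<in> orbit_span v0"
  unfolding orbit_span_def by (rule vs.span_base) (auto intro!: image_eqI[where x=id] tau_group.id)

text \<open>The span of a finite set carries a positive definite Hermitian form: the standard one
  in the coordinates with respect to a basis.\<close>
lemma span_hermitian_form:
  assumes "finite S"
  obtains bt :: "'v \<Rightarrow> 'v \<Rightarrow> complex" and q :: "'v \<Rightarrow> real" where
    "\<And>u w z. u \<in> vs.span S \<Longrightarrow> w \<in> vs.span S \<Longrightarrow> bt (u + w) z = bt u z + bt w z"
    "\<And>c u w. u \<in> vs.span S \<Longrightarrow> bt (smul c u) w = c * bt u w"
    "\<And>u w. bt w u = cnj (bt u w)"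
    "\<And>u. bt u u = of_real (q u)" "\<And>u. q u \<ge> 0"
    "\<And>u. u \<in> vs.span S \<Longrightarrow> q u = 0 \<Longrightarrow> u = 0"
proof -
  obtain B where B: "B \<subseteq> S" "vs.independent B" "S \<subseteq> vs.span B"
    using vs.maximal_independent_subset[of S] by blast
  have finB: "finite B" using finite_subset[OF B(1) assms] .
  have SB: "vs.span S = vs.span B"
    using B by (metis vs.span_eq order.trans)
  define rep where "rep = vs.representation B"
  define bt where "bt u w = (\<Sum>b\<in>B. rep u b * cnj (rep w b))" for u w
  define q where "q u = (\<Sum>b\<in>B. (cmod (rep u b))\<^sup>2)" for u
  show thesis
  proof (rule that[of bt q])
    show "bt (u + w) z = bt u z + bt w z" if "u \<in> vs.span S" "w \<in> vs.span S" for u w z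
      using vs.representation_add[OF B(2)] that
      by (simp add: bt_def rep_def SB distrib_right sum.distrib)
    show "bt (smul c u) w = c * bt u w" if "u \<in> vs.span S" for c u w
      using vs.representation_scale[OF B(2)] that
      by (simp add: bt_def rep_def SB sum_distrib_left mult.assoc)
    show "bt w u = cnj (bt u w)" for u w
      by (simp add: bt_def mult.commute)
    show "bt u u = of_real (q u)" for u
      unfolding bt_def q_def of_real_sum by (rule sum.cong[OF refl]) (simp only: complex_norm_square)
    show "q u \<ge> 0" for u
      unfolding q_def by (simp add: sum_nonneg)
    show "u = 0" if u: "u \<in> vs.span S" "q u = 0" for u
    proof -
      have "\<forall>b\<in>B. rep u b = 0"
        using u(2) unfolding q_def by (subst (asm) sum_nonneg_eq_0_iff[OF finB]) auto
      moreover have "(\<Sum>b\<in>B. smul (rep u b) b) = u"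
        unfolding rep_def by (rule vs.sum_representation_eq) (use B(2) u(1) finB SB in auto)
      ultimately show ?thesis by simp
    qed
  qed
qed

end

locale invariant_form = spin_relations smul n T
  for smul :: "complex \<Rightarrow> 'v::ab_group_add \<Rightarrow> 'v" and n T +
  fixes U :: "'v set" and ip :: "'v \<Rightarrow> 'v \<Rightarrow> complex"
  assumes subU: "vs.subspace U" and TU: "\<And>i u. i \<in> {1..<n} \<Longrightarrow> u \<in> U \<Longrightarrow> T i u \<in> U"
    and ip_add: "\<And>u w z. u \<in> U \<Longrightarrow> w \<in> U \<Longrightarrow> z \<in> U \<Longrightarrow> ip (u + w) z = ip u z + ip w z"
    and ip_scale: "\<And>c u w. u \<in> U \<Longrightarrow> w \<in> U \<Longrightarrow> ip (smul c u) w = c * ip u w"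
    and ip_sym: "\<And>u w. u \<in> U \<Longrightarrow> w \<in> U \<Longrightarrow> ip w u = cnj (ip u w)"
    and ip_pos: "\<And>u. u \<in> U \<Longrightarrow> ip u u = 0 \<Longrightarrow> u = 0"
    and ip_T: "\<And>i u w. i \<in> {1..<n} \<Longrightarrow> u \<in> U \<Longrightarrow> w \<in> U \<Longrightarrow> ip (T i u) w = ip u (T i w)"

text \<open>Weyl's unitary trick: averaging the form of the orbit span over the finite group
  yields an invariant form around every vector.\<close>
lemma (in spin_relations) invariant_form_exists: "\<exists>U ip. invariant_form smul n T U ip \<and> v0 \<in> U"
proof -
  define S where "S = (\<lambda>g. g v0) ` tau_group"
  define U where "U = orbit_span v0"
  have US: "U = vs.span S" unfolding U_def S_def orbit_span_def ..
  have finS: "finite S" unfolding S_def using finite_tau_group by simp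
  obtain bt q where bt_add: "\<And>u w z. u \<in> U \<Longrightarrow> w \<in> U \<Longrightarrow> bt (u + w) z = bt u z + bt w z"
    and bt_scale: "\<And>c u w. u \<in> U \<Longrightarrow> bt (smul c u) w = c * bt u w"
    and bt_sym: "\<And>u w. bt w u = cnj (bt u w)"
    and bt_q: "\<And>u. bt u u = of_real (q u)" and q_nonneg: "\<And>u. q u \<ge> 0"
    and q_pos: "\<And>u. u \<in> U \<Longrightarrow> q u = 0 \<Longrightarrow> u = 0"
    by (rule span_hermitian_form[OF finS, folded US]) blast
  have gU: "g u \<in> U" if "g \<in> tau_group" "u \<in> U" for g u
    using orbit_span_invariant that unfolding U_def by blast
  have "invariant_form smul n T U (averaged_form bt)"
  proof (rule invariant_form.intro[OF spin_relations_axioms], rule invariant_form_axioms.intro)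
    show "vs.subspace U" unfolding US by simp
    show "T i u \<in> U" if "i \<in> {1..<n}" "u \<in> U" for i u
      using gU[OF tau_group.T[OF tau_group.id]] that by simp
    show "averaged_form bt (u + w) z = averaged_form bt u z + averaged_form bt w z"
      if "u \<in> U" "w \<in> U" "z \<in> U" for u w z
      unfolding averaged_form_def using that
      by (simp add: lin_add[OF lin_tau_group] bt_add gU sum.distrib)
    show "averaged_form bt (smul c u) w = c * averaged_form bt u w" if "u \<in> U" "w \<in> U" for c u w
      unfolding averaged_form_def using that
      by (simp add: lin_scale[OF lin_tau_group] bt_scale gU sum_distrib_left)
    show "averaged_form bt w u = cnj (averaged_form bt u w)" for u w
      unfolding averaged_form_def cnj_sum by (rule sum.cong[OF refl], rule bt_sym)
    show "u = 0" if "u \<in> U" "averaged_form bt u u = 0" for u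
      using averaged_form_definite[OF bt_q q_nonneg that(2)] q_pos that(1) by blast
    show "averaged_form bt (T i u) w = averaged_form bt u (T i w)" if "i \<in> {1..<n}" for i u w
      using averaged_form_T[OF that] .
  qed
  then show ?thesis using in_orbit_span unfolding U_def by blast
qed

context invariant_form
begin

lemma U_zero: "0 \<in> U" using vs.subspace_0[OF subU] .
lemma U_scale: "u \<in> U \<Longrightarrow> smul c u \<in> U" using vs.subspace_scale[OF subU] .
lemma U_neg: "u \<in> U \<Longrightarrow> - u \<in> U" using vs.subspace_neg[OF subU] .
lemma U_diff: "u \<in> U \<Longrightarrow> w \<in> U \<Longrightarrow> u - w \<in> U" using vs.subspace_diff[OF subU] .
lemma U_sum: "(\<And>j. j \<in> S \<Longrightarrow> f j \<in> U) \<Longrightarrow> sum f S \<in> U" using vs.subspace_sum[OF subU] .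

lemma tau_in_U: "1 \<le> a \<Longrightarrow> a + d \<le> n \<Longrightarrow> u \<in> U \<Longrightarrow> tau a d u \<in> U"
proof (induction d arbitrary: u rule: induct_nat_012)
  case (ge2 d)
  then show ?case by (simp add: tau_Suc_Suc U_neg TU)
qed (simp_all add: U_zero TU)

lemma PI_in_U: "m \<le> n \<Longrightarrow> u \<in> U \<Longrightarrow> PI m u \<in> U"
  unfolding PI_expand by (rule U_sum) (auto intro: tau_in_U)

lemma ip_zero1: "w \<in> U \<Longrightarrow> ip 0 w = 0"
  using ip_scale[of w w 0] by simp
lemma ip_zero2: "w \<in> U \<Longrightarrow> ip w 0 = 0"
  using ip_sym[of 0 w] ip_zero1 U_zero by simp
lemma ip_neg1: "u \<in> U \<Longrightarrow> w \<in> U \<Longrightarrow> ip (- u) w = - ip u w"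
  using ip_scale[of u w "-1"] by simp
lemma ip_neg2: "u \<in> U \<Longrightarrow> w \<in> U \<Longrightarrow> ip w (- u) = - ip w u"
  using ip_sym[of "- u" w] ip_sym[of u w] ip_neg1 U_neg by simp
lemma ip_diff1: "u \<in> U \<Longrightarrow> w \<in> U \<Longrightarrow> z \<in> U \<Longrightarrow> ip (u - w) z = ip u z - ip w z"
  using ip_add[of u "- w" z] ip_neg1[of w z] U_neg by simp
lemma ip_scale2: "u \<in> U \<Longrightarrow> w \<in> U \<Longrightarrow> ip w (smul c u) = cnj c * ip w u"
  using ip_sym[of "smul c u" w] ip_sym[of u w] ip_scale U_scale by simp
lemma ip_sum1:
  "finite S \<Longrightarrow> (\<And>j. j \<in> S \<Longrightarrow> f j \<in> U) \<Longrightarrow> w \<in> U \<Longrightarrow> ip (sum f S) w = (\<Sum>j\<in>S. ip (f j) w)"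
  by (induction S rule: finite_induct) (auto simp: ip_zero1 ip_add U_sum)

lemma tau_selfadjoint:
  "1 \<le> a \<Longrightarrow> a + d \<le> n \<Longrightarrow> u \<in> U \<Longrightarrow> w \<in> U \<Longrightarrow> ip (tau a d u) w = ip u (tau a d w)"
proof (induction d arbitrary: u w rule: induct_nat_012)
  case (ge2 d)
  have tU: "tau a (Suc d) z \<in> U" "T (Suc (a + d)) z \<in> U" if "z \<in> U" for z
    using ge2 that by (auto intro: tau_in_U TU)
  have "ip (tau a (Suc (Suc d)) u) w = - ip (tau a (Suc d) (T (Suc (a + d)) (tau a (Suc d) u))) w"
    using ge2 by (simp add: tau_Suc_Suc ip_neg1 tU)
  also have "\<dots> = - ip u (tau a (Suc d) (T (Suc (a + d)) (tau a (Suc d) w)))"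
    using ge2 by (simp add: tU ip_T)
  also have "\<dots> = ip u (tau a (Suc (Suc d)) w)"
    using ge2 by (simp add: tau_Suc_Suc ip_neg2 tU)
  finally show ?case .
qed (simp_all add: ip_zero1 ip_zero2 ip_T)

lemma PI_selfadjoint: "m \<le> n \<Longrightarrow> u \<in> U \<Longrightarrow> w \<in> U \<Longrightarrow> ip (PI m u) w = ip u (PI m w)"
proof -
  assume m: "m \<le> n" and uw: "u \<in> U" "w \<in> U"
  have "ip (PI m u) w = (\<Sum>j\<in>{1..<m}. ip (tau j (m - j) u) w)"
    unfolding PI_expand using m uw by (intro ip_sum1) (auto intro: tau_in_U)
  also have "\<dots> = (\<Sum>j\<in>{1..<m}. cnj (ip (tau j (m - j) w) u))"
    using m uw by (intro sum.cong refl) (auto simp: tau_selfadjoint tau_in_U ip_sym[of u])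
  also have "\<dots> = cnj (ip (PI m w) u)"
    unfolding PI_expand using m uw by (subst ip_sum1) (auto intro: tau_in_U)
  also have "\<dots> = ip u (PI m w)" using ip_sym[of u "PI m w"] m uw PI_in_U by simp
  finally show ?thesis .
qed

lemma PI_sq_selfadjoint:
  "m \<le> n \<Longrightarrow> u \<in> U \<Longrightarrow> w \<in> U \<Longrightarrow> ip (PI m (PI m u)) w = ip u (PI m (PI m w))"
  by (simp add: PI_selfadjoint PI_in_U)

lemma weight_real: "m \<le> n \<Longrightarrow> u \<in> U \<Longrightarrow> u \<noteq> 0 \<Longrightarrow> PI m (PI m u) = smul \<alpha> u \<Longrightarrow> cnj \<alpha> = \<alpha>"
proof -
  assume m: "m \<le> n" and u: "u \<in> U" "u \<noteq> 0" and e: "PI m (PI m u) = smul \<alpha> u"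
  have "\<alpha> * ip u u = cnj \<alpha> * ip u u"
    using PI_sq_selfadjoint[OF m u(1) u(1)] e by (simp add: ip_scale ip_scale2 u)
  moreover have "ip u u \<noteq> 0" using ip_pos u by blast
  ultimately show ?thesis by simp
qed

lemma weight_orthogonal:
  "m \<le> n \<Longrightarrow> u \<in> U \<Longrightarrow> w \<in> U \<Longrightarrow> PI m (PI m u) = smul \<alpha> u \<Longrightarrow> PI m (PI m w) = smul \<beta> w \<Longrightarrow>
   \<alpha> \<noteq> cnj \<beta> \<Longrightarrow> ip u w = 0"
proof -
  assume m: "m \<le> n" and uw: "u \<in> U" "w \<in> U"
    and e: "PI m (PI m u) = smul \<alpha> u" "PI m (PI m w) = smul \<beta> w" and ne: "\<alpha> \<noteq> cnj \<beta>"
  have "\<alpha> * ip u w = cnj \<beta> * ip u w"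
    using PI_sq_selfadjoint[OF m uw] e by (simp add: ip_scale ip_scale2 uw)
  then show ?thesis using ne by simp
qed

text \<open>Part (1): x^2 and y^2 cannot have a common eigenvalue on a nonzero vector.  Otherwise
  q = (x - y) v satisfies x^2 q = alpha q while q = (x^2 - alpha) t v, so q is orthogonal to
  itself; then x v = y v forces alpha = 0, x v = 0 = y v, and v = y t v is orthogonal to v.\<close>
lemma weights_distinct:
  assumes i: "i \<in> {1..<n}" and v: "v \<in> U" "v \<noteq> 0"
    and xv: "PI i (PI i v) = smul \<alpha> v" and yv: "PI (Suc i) (PI (Suc i) v) = smul \<alpha> v"
  shows False
proof -
  have iU: "i \<le> n" "Suc i \<le> n" using i by auto
  have xU: "PI i z \<in> U" and yU: "PI (Suc i) z \<in> U" and tU: "T i z \<in> U" if "z \<in> U" for z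
    using that i by (auto intro: PI_in_U TU)
  define q where "q = PI i v - PI (Suc i) v"
  have qU: "q \<in> U" unfolding q_def using v by (intro U_diff xU yU)
  have tvU: "T i v \<in> U" using v tU by auto
  have xq: "PI i (PI i q) = smul \<alpha> q" unfolding q_def using diff_weights[OF i xv yv] by auto
  have xtv: "PI i (PI i (T i v)) - smul \<alpha> (T i v) = q"
    unfolding q_def by (simp add: x_sq_T[OF i] yv lin_scale[OF lin_T[OF i]])
  have ra: "cnj \<alpha> = \<alpha>" using weight_real[OF iU(1) v xv] .
  have "ip q q = ip (PI i (PI i (T i v))) q - \<alpha> * ip (T i v) q"
    using tvU qU xU by (simp add: xtv[symmetric] ip_diff1 ip_scale U_scale)
  also have "\<dots> = 0"
    using PI_sq_selfadjoint[OF iU(1) tvU qU] by (simp add: xq ip_scale2 tvU qU ra)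
  finally have "q = 0" using ip_pos qU by blast
  then have xy: "PI i v = PI (Suc i) v" unfolding q_def by simp
  have "smul \<alpha> v = - smul \<alpha> v"
    using PI_anticommute[of i "Suc i" v] i xv yv by (simp add: xy)
  then have "smul (\<alpha> + \<alpha>) v = 0" by (simp only: vs.scale_left_distrib eq_neg_iff_add_eq_0)
  then have a0: "\<alpha> = 0" using v(2) by simp
  have "ip (PI i v) (PI i v) = ip (PI i (PI i v)) v" using PI_selfadjoint[OF iU(1) xU[OF v(1)] v(1)] by simp
  also have "\<dots> = 0" using xv a0 v by (simp add: ip_zero1)
  finally have x0: "PI i v = 0" using ip_pos xU v by blast
  have "PI (Suc i) (T i v) = v" using T_PI_exchange[OF i, of v] x0 lin_zero[OF lin_T[OF i]] by simp
  then have "ip v v = ip (PI (Suc i) (T i v)) v" by simp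
  also have "\<dots> = ip (T i v) (PI (Suc i) v)" using PI_selfadjoint[OF iU(2) tvU v(1)] .
  also have "\<dots> = 0" using x0 xy ip_zero2 tvU by simp
  finally show False using ip_pos v by blast
qed

text \<open>Part (2): if alpha + beta = (alpha - beta)^2, the exchange vector w satisfies
  t w = - c (x - y) w; as w \<perp> (x - y) v and v \<perp> (x - y) w by weights, |w|^2 = <v, t w> = 0.\<close>
lemma T_on_degenerate_weight:
  assumes i: "i \<in> {1..<n}" and v: "v \<in> U"
    and xv: "PI i (PI i v) = smul \<alpha> v" and yv: "PI (Suc i) (PI (Suc i) v) = smul \<beta> v"
    and ab: "\<alpha> \<noteq> \<beta>" and sq: "\<alpha> + \<beta> = (\<alpha> - \<beta>)^2"
  shows "T i v = smul (1 / (\<alpha> - \<beta>)) (PI i v - PI (Suc i) v)"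
proof (cases "v = 0")
  case True
  then show ?thesis using lin_local[OF i] by (simp add: lin_zero)
next
  case False
  have iU: "i \<le> n" "Suc i \<le> n" using i by auto
  have xU: "PI i z \<in> U" and yU: "PI (Suc i) z \<in> U" and tU: "T i z \<in> U" if "z \<in> U" for z
    using that i by (auto intro: PI_in_U TU)
  define c where "c = 1 / (\<alpha> - \<beta>)"
  define u where "u = PI i v - PI (Suc i) v"
  define w where "w = exchange_vector i \<alpha> \<beta> v"
  have w_eq: "w = T i v - smul c u" unfolding w_def exchange_vector_def c_def u_def ..
  have uU: "u \<in> U" unfolding u_def using v by (intro U_diff xU yU)
  have wU: "w \<in> U" unfolding w_eq using v uU by (intro U_diff tU U_scale)
  note W = exchange_vector_weights[OF i xv yv ab w_def]
  have "(\<alpha> + \<beta>) / (\<alpha> - \<beta>)^2 = 1" using sq ab by simp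
  then have tw: "T i w = - smul c (PI i w - PI (Suc i) w)" using W(3) by (simp add: c_def)
  have rb: "cnj \<beta> = \<beta>" using weight_real[OF iU(2) v False yv] .
  define z where "z = PI i w - PI (Suc i) w"
  have zU: "z \<in> U" unfolding z_def using wU by (intro U_diff xU yU)
  have xz: "PI i (PI i z) = smul \<beta> z" unfolding z_def using diff_weights[OF i W(1) W(2)] by auto
  have xu: "PI i (PI i u) = smul \<alpha> u" unfolding u_def using diff_weights[OF i xv yv] by auto
  have o1: "ip u w = 0" using weight_orthogonal[OF iU(1) uU wU xu W(1)] ab rb by simp
  have o2: "ip v z = 0" using weight_orthogonal[OF iU(1) v zU xv xz] ab rb by simp
  have "ip w w = ip (T i v - smul c u) w" by (simp only: w_eq[symmetric])
  also have "\<dots> = ip (T i v) w - c * ip u w"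
    using v uU wU tU by (simp add: ip_diff1 ip_scale U_scale)
  also have "\<dots> = ip v (T i w)" using ip_T[OF i v wU] o1 by simp
  also have "\<dots> = 0" unfolding tw z_def[symmetric] using v zU by (simp add: ip_neg2 ip_scale2 U_scale o2)
  finally have "w = 0" using ip_pos wU by blast
  then show ?thesis unfolding w_eq c_def u_def by simp
qed

end

context spin_relations
begin

lemma pi_eigenspace_weight:
  "v \<in> pi_eigenspace smul n T a \<Longrightarrow> m \<in> {1..n} \<Longrightarrow> PI m (PI m v) = smul (a m) v"
  unfolding pi_eigenspace_def by auto

lemma zero_in_pi_eigenspace: "0 \<in> pi_eigenspace smul n T a"
  unfolding pi_eigenspace_def by (auto simp: lin_zero[OF lin_PI])

lemma adjacent_weights_distinct:
  assumes i: "i \<in> {1..<n}" and v: "v \<in> pi_eigenspace smul n T a" "v \<noteq> 0"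
  shows "a i \<noteq> a (Suc i)"
proof
  assume eq: "a i = a (Suc i)"
  obtain U ip where F: "invariant_form smul n T U ip" "v \<in> U"
    using invariant_form_exists by blast
  have "PI i (PI i v) = smul (a i) v" "PI (Suc i) (PI (Suc i) v) = smul (a i) v"
    using pi_eigenspace_weight[OF v(1), of i] pi_eigenspace_weight[OF v(1), of "Suc i"] i eq by auto
  then show False using invariant_form.weights_distinct[OF F(1) i F(2) v(2)] by blast
qed

lemma T_on_pi_eigenspace:
  assumes i: "i \<in> {1..<n}" and v: "v \<in> pi_eigenspace smul n T a"
    and ne: "a i \<noteq> a (Suc i)" and sq: "a i + a (Suc i) = (a i - a (Suc i))^2"
  shows "T i v = smul (1 / (a i - a (Suc i))) (PI i v - PI (Suc i) v)"
proof -
  obtain U ip where F: "invariant_form smul n T U ip" "v \<in> U"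
    using invariant_form_exists by blast
  have "PI i (PI i v) = smul (a i) v" "PI (Suc i) (PI (Suc i) v) = smul (a (Suc i)) v"
    using pi_eigenspace_weight[OF v, of i] pi_eigenspace_weight[OF v, of "Suc i"] i by auto
  then show ?thesis using invariant_form.T_on_degenerate_weight[OF F(1) i F(2) _ _ ne sq] by blast
qed

end

theorem mainTheorem19:
  fixes smul :: "complex \<Rightarrow> 'v::ab_group_add \<Rightarrow> 'v"
    and V0 V1 :: "'v set" and k n :: nat
    and P T :: "nat \<Rightarrow> 'v \<Rightarrow> 'v" and a :: "nat \<Rightarrow> complex"
  assumes "simple_graded_module smul V0 V1 k n P T"
    and "pi_eigenspace smul n T a \<noteq> {0}"
  shows "\<forall>i\<in>{1..<n}.
           a i \<noteq> a (i+1) \<and>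
           (a i + a (i+1) = (a i - a (i+1))^2 \<longrightarrow>
              (\<forall>v\<in>pi_eigenspace smul n T a.
                 T i v = smul (1 / (a i - a (i+1))) (pi_op T i v - pi_op T (i+1) v))) \<and>
           (a i + a (i+1) \<noteq> (a i - a (i+1))^2 \<longrightarrow>
              pi_eigenspace smul n T (a(i := a (i+1), i+1 := a i)) \<noteq> {0})"
proof -
  have "graded_module smul V0 V1 k n P T"
    using assms(1) unfolding simple_graded_module_def by (elim conjE)
  then interpret spin_relations smul n T by (rule graded_module_spin_relations)
  obtain v0 where v0: "v0 \<in> pi_eigenspace smul n T a" "v0 \<noteq> 0"
    using assms(2) zero_in_pi_eigenspace by blast
  show ?thesis
  proof (intro ballI conjI impI)
    fix i assume i: "i \<in> {1..<n}"
    show ne: "a i \<noteq> a (i+1)" using adjacent_weights_distinct[OF i v0] by simp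
    show "T i v = smul (1 / (a i - a (i+1))) (pi_op T i v - pi_op T (i+1) v)"
      if "a i + a (i+1) = (a i - a (i+1))^2" and "v \<in> pi_eigenspace smul n T a" for v
      using T_on_pi_eigenspace[OF i that(2)] ne that(1) by simp
    show "pi_eigenspace smul n T (a(i := a (i+1), i+1 := a i)) \<noteq> {0}"
      if "a i + a (i+1) \<noteq> (a i - a (i+1))^2"
      using exchanged_weight_nonzero[OF i v0] ne that by simp
  qed
qed

end
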